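(* Let $\varphi$ and $\omega$ be Schwarz-type functions with $\varphi\not\equiv 0$, let $F=\ell\circ\omega\in\mathcal{P}$, and suppose $T_{F,\varphi}(f)\in\mathcal{P}$ for every $f\in\mathcal{P}$. Denoting by $F(\zeta)$ and $\omega(\zeta)$ the radial limits on the unit circle $\mathbb{T}$, let $$A=\{\zeta\in\mathbb{T}:\mathrm{Re}\,F(\zeta)=0\}=\{\zeta\in\mathbb{T}:|\omega(\zeta)|=1,\ \omega(\zeta)\ne 1\}.$$ Then $m(A)=0$, where $m$ is normalized arc length measure on $\mathbb{T}$.
   Context: $\mathbb{D}$ is the open unit disk, $\mathbb{T}$ its boundary. $\mathcal{P}$ is the set of analytic $f$ on $\mathbb{D}$ with $\mathrm{Re}\,f>0$ and $f(0)=1$. A Schwarz-type function is an analytic $\varphi:\mathbb{D}\to\mathbb{D}$ with $\varphi(0)=0$. $\ell(z)=\frac{1+z}{1-z}$. $T_{F,\varphi}(f)=F\cdot(f\circ\varphi)$. *)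

theory Defs
  imports "HOL-Complex_Analysis.Complex_Analysis"
begin

definition ell :: "complex \<Rightarrow> complex" where
  "ell z = (1 + z) / (1 - z)"

definition schwarz_type :: "(complex \<Rightarrow> complex) \<Rightarrow> bool" where
  "schwarz_type \<phi> \<longleftrightarrow> \<phi> holomorphic_on ball 0 1 \<and> \<phi> ` ball 0 1 \<subseteq> ball 0 1 \<and> \<phi> 0 = 0"

definition class_P :: "(complex \<Rightarrow> complex) \<Rightarrow> bool" where
  "class_P f \<longleftrightarrow> f holomorphic_on ball 0 1 \<and> (\<forall>z\<in>ball 0 1. Re (f z) > 0) \<and> f 0 = 1"

definition T_op :: "(complex \<Rightarrow> complex) \<Rightarrow> (complex \<Rightarrow> complex) \<Rightarrow> (complex \<Rightarrow> complex) \<Rightarrow> complex \<Rightarrow> complex" where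
  "T_op F \<phi> f = (\<lambda>z. F z * f (\<phi> z))"

definition radial_limit :: "(complex \<Rightarrow> complex) \<Rightarrow> complex \<Rightarrow> complex \<Rightarrow> bool" where
  "radial_limit F \<zeta> L \<longleftrightarrow> ((\<lambda>r::real. F (of_real r * \<zeta>)) \<longlongrightarrow> L) (at_left 1)"

end

theory Submission
  imports Defs
begin

text \<open>
  Let \<open>F = ell \<circ> \<omega>\<close> have radial limit \<open>L\<close> with \<open>Re L = 0\<close> at \<open>\<zeta>\<close>. If \<open>L = 0\<close>, then
  \<open>\<omega> = (F - 1) / (F + 1)\<close> has radial limit \<open>-1\<close> there. Otherwise \<open>Im L \<noteq> 0\<close>; testing the
  hypothesis on the rotated half-plane maps \<open>\<lambda>w. ell (c * w)\<close>, \<open>\<bar>c\<bar> = 1\<close>, gives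
  \<open>2 \<bar>\<phi>\<bar> \<bar>Im F\<bar> \<le> Re F\<close> in the disc, so \<open>\<phi>\<close> has radial limit \<open>0\<close> there.
  Both \<open>\<omega> + 1\<close> and \<open>\<phi>\<close> are bounded holomorphic functions that do not vanish identically, and
  such a function \<open>g \<le> M\<close> has radial limit \<open>0\<close> only on a null set: on circles of radii
  \<open>\<rho>\<^sub>n \<rightarrow> 1\<close> avoiding its zeros, Jensen's inequality bounds the integrals of the nonnegative
  functions \<open>ln M - ln \<bar>g\<bar>\<close> uniformly, so by Fatou's lemma they tend to \<open>\<infinity>\<close> only on a null set.
\<close>

lemma holomorphic_mean_value_circle:
  fixes f :: "complex \<Rightarrow> complex"
  assumes hol: "f holomorphic_on cball 0 r" and r: "r > 0"
  shows "((\<lambda>t. f (of_real r * cis t)) has_integral (2*pi * f 0)) {0..2*pi}"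
proof -
  have circle: "circlepath 0 r x = of_real r * cis (2*pi*x)" for x
    by (simp add: circlepath cis_conv_exp mult_ac)
  have "((\<lambda>u. f u / (u - 0)) has_contour_integral (2*pi*\<i> * f 0)) (circlepath 0 r)"
    using Cauchy_integral_circlepath_simple[OF hol, of 0] r by simp
  hence "((\<lambda>x. f (circlepath 0 r x) / (circlepath 0 r x - 0)
            * vector_derivative (circlepath 0 r) (at x within {0..1}))
          has_integral (2*pi*\<i> * f 0)) {0..1}"
    unfolding has_contour_integral_def .
  moreover have "f (circlepath 0 r x) / (circlepath 0 r x - 0)
            * vector_derivative (circlepath 0 r) (at x within {0..1})
          = (2*pi*\<i>) * f (of_real r * cis (2*pi*x))" if "x \<in> {0..1}" for x
    using that r vector_derivative_circlepath01[of x 0 r]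
    by (simp add: circle cis_conv_exp mult_ac)
  ultimately have "((\<lambda>x. (2*pi*\<i>) * f (of_real r * cis (2*pi*x))) has_integral (2*pi*\<i> * f 0)) {0..1}"
    using has_integral_cong by (metis (no_types, lifting))
  hence "((\<lambda>x. f (of_real r * cis (2*pi*x))) has_integral f 0) {0..1}"
    by (subst (asm) has_integral_mult_right_iff) auto
  hence "((\<lambda>t. f (of_real r * cis (2*pi*((1/(2*pi)) *\<^sub>R t + 0))))
          has_integral (1 / (\<bar>1/(2*pi)\<bar> ^ DIM(real))) *\<^sub>R f 0)
         ((\<lambda>x. (1 / (1/(2*pi))) *\<^sub>R x + -((1 / (1/(2*pi))) *\<^sub>R 0)) ` cbox 0 1)"
    by (intro has_integral_affinity) auto
  moreover have "(\<lambda>x. (1 / (1/(2*pi))) *\<^sub>R x + -((1 / (1/(2*pi))) *\<^sub>R 0)) ` cbox 0 1 = {0..2*pi::real}"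
    by (auto simp: image_iff intro!: bexI[where x="x/(2*pi)" for x])
  ultimately show ?thesis by (simp add: scaleR_conv_of_real)
qed

lemma cball_subset_open_imp_larger_ball:
  assumes "open B" "cball (0::complex) r \<subseteq> B" "r \<ge> 0"
  obtains R where "R > r" "ball 0 R \<subseteq> B"
proof -
  obtain e where e: "e > 0" "(\<Union>x\<in>cball 0 r. ball x e) \<subseteq> B"
    using compact_subset_open_imp_ball_epsilon_subset[OF compact_cball assms(1,2)] by blast
  have "y \<in> B" if y: "y \<in> ball 0 (r + e)" for y
  proof (cases "norm y \<le> r")
    case True
    then show ?thesis using e by force
  next
    case False
    \<comment> \<open>the radial projection of \<open>y\<close> onto the circle of radius \<open>r\<close> lies within \<open>e\<close> of \<open>y\<close>\<close>
    define x where "x = of_real (r / norm y) * y"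
    have ny: "norm y > 0" using False assms(3) by linarith
    have nx: "norm x = r" using ny assms(3) by (simp add: x_def norm_mult norm_divide)
    have "y - x = of_real (1 - r / norm y) * y" by (simp add: x_def algebra_simps)
    hence "norm (y - x) = \<bar>1 - r / norm y\<bar> * norm y" by (simp only: norm_mult norm_of_real)
    hence "dist x y = (1 - r / norm y) * norm y"
      using False ny by (simp add: dist_norm norm_minus_commute)
    also have "\<dots> = norm y - r" using ny by (simp add: field_simps)
    finally have "dist x y < e" using y by simp
    then show ?thesis using e nx by force
  qed
  then show ?thesis using that e by (meson less_add_same_cancel1 subsetI)
qed

lemma jensen_formula_zero_free:
  fixes f :: "complex \<Rightarrow> complex"
  assumes hol: "f holomorphic_on S" and S: "open S" "cball 0 r \<subseteq> S" and r: "r > 0"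
    and nz: "\<And>z. z \<in> cball 0 r \<Longrightarrow> f z \<noteq> 0"
  shows "((\<lambda>t. ln (norm (f (of_real r * cis t)))) has_integral (2*pi * ln (norm (f 0)))) {0..2*pi}"
proof -
  have "open (S \<inter> f -` (-{0}))"
    using hol S(1) by (intro continuous_open_preimage holomorphic_on_imp_continuous_on) auto
  moreover have "cball 0 r \<subseteq> S \<inter> f -` (-{0})" using S nz by auto
  ultimately obtain R where R: "R > r" "ball 0 R \<subseteq> S \<inter> f -` (-{0})"
    using cball_subset_open_imp_larger_ball r by (metis less_eq_real_def)
  obtain L where L: "L holomorphic_on ball 0 R" "\<And>z. z \<in> ball 0 R \<Longrightarrow> exp (L z) = f z"
  proof (rule holomorphic_logarithm_exists[of "ball 0 R" f 0])
  qed (use holomorphic_on_subset[OF hol] R r in auto)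
  have log_norm: "ln (norm (f z)) = Re (L z)" if "z \<in> ball 0 R" for z
    using L(2)[OF that] by (metis ln_exp norm_exp_eq_Re)
  have "L holomorphic_on cball 0 r" using holomorphic_on_subset[OF L(1)] R(1) by (simp add: cball_subset_ball_iff)
  from has_integral_Re[OF holomorphic_mean_value_circle[OF this r]]
  have "((\<lambda>t. Re (L (of_real r * cis t))) has_integral 2*pi * Re (L 0)) {0..2*pi}" by simp
  moreover have "of_real r * cis t \<in> ball 0 R" for t using R r by (simp add: norm_mult)
  ultimately show ?thesis using R r by (simp add: log_norm)
qed

lemma holomorphic_factor_zero_global:
  fixes f :: "complex \<Rightarrow> complex"
  assumes hol: "f holomorphic_on S" and S: "open S" "connected S" and a: "a \<in> S"
    and nz: "\<exists>w\<in>S. f w \<noteq> 0"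
  obtains q k where "q holomorphic_on S" "q a \<noteq> 0" "\<And>z. z \<in> S \<Longrightarrow> f z = (z - a)^k * q z"
proof (cases "f a = 0")
  case False
  show ?thesis by (rule that[of f 0]) (use hol False in auto)
next
  case True
  have "\<not> f constant_on S" using nz True a unfolding constant_on_def by metis
  then obtain g r n where g: "0 < n" "0 < r" "ball a r \<subseteq> S" "g holomorphic_on ball a r"
      "\<And>w. w \<in> ball a r \<Longrightarrow> f w = (w - a)^n * g w" "\<And>w. w \<in> ball a r \<Longrightarrow> g w \<noteq> 0"
    using holomorphic_factor_zero_nonconstant[OF hol S a True] by metis
  define q where "q z = (if z = a then g a else f z / (z - a)^n)" for z
  have "q holomorphic_on (S - {a})"
    by (rule holomorphic_transform[where f="\<lambda>z. f z / (z - a)^n"])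
       (auto simp: q_def intro!: holomorphic_intros holomorphic_on_subset[OF hol])
  moreover have "q holomorphic_on ball a r"
    by (rule holomorphic_transform[OF g(4)]) (use g(5) in \<open>auto simp: q_def\<close>)
  ultimately have "q holomorphic_on (S - {a}) \<union> ball a r"
    using S(1) by (intro holomorphic_on_Un) auto
  moreover have "(S - {a}) \<union> ball a r = S" using g(2,3) a by auto
  ultimately have "q holomorphic_on S" by simp
  moreover have "q a \<noteq> 0" using g(6)[of a] g(2) by (simp add: q_def)
  moreover have "f z = (z - a)^n * q z" if "z \<in> S" for z
    using True g(1) by (cases "z = a") (auto simp: q_def)
  ultimately show ?thesis using that by blast
qed

lemma norm_blaschke_numerator_on_circle:
  fixes z a :: complex
  assumes "norm z = r" "r > 0"
  shows "norm ((of_real (r^2) - cnj a * z) / of_real r) = norm (z - a)"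
proof -
  have "of_real (r^2) = z * cnj z" using assms(1) complex_norm_square[of z] by simp
  hence "of_real (r^2) - cnj a * z = z * cnj (z - a)" by (simp add: algebra_simps)
  hence "norm (of_real (r^2) - cnj a * z) = r * norm (z - a)"
    using assms(1) by (simp only: norm_mult complex_mod_cnj)
  thus ?thesis using assms(2) by (simp add: norm_divide)
qed

lemma divide_out_zero_by_blaschke_factor:
  fixes f :: "complex \<Rightarrow> complex"
  assumes hol: "f holomorphic_on S" and S: "open S" "connected S" "cball 0 r \<subseteq> S"
    and f0: "f 0 \<noteq> 0" and a: "a \<in> ball 0 r" "f a = 0"
  obtains p where "p holomorphic_on S" "norm (f 0) \<le> norm (p 0)"
    "\<And>z. z \<in> sphere 0 r \<Longrightarrow> norm (p z) = norm (f z)"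
    "{z\<in>ball 0 r. p z = 0} = {z\<in>ball 0 r. f z = 0} - {a}"
proof -
  have ar: "norm a < r" using a(1) by simp
  hence r: "r > 0" by (meson norm_ge_zero le_less_trans)
  have "0 \<in> S" "a \<in> S" using S(3) a(1) r by auto
  then obtain q k where q: "q holomorphic_on S" "q a \<noteq> 0" "\<And>z. z \<in> S \<Longrightarrow> f z = (z - a)^k * q z"
    using holomorphic_factor_zero_global[OF hol S(1,2)] f0 by metis
  define b where "b z = (of_real (r^2) - cnj a * z) / of_real r" for z
  define p where "p z = q z * b z ^ k" for z
  have b_nz: "b z \<noteq> 0" if "norm z \<le> r" for z
  proof -
    have "norm (cnj a * z) \<le> norm a * r" using that by (simp add: norm_mult mult_left_mono)
    also have "\<dots> < r^2" using ar r by (simp add: power2_eq_square)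
    finally have "cnj a * z \<noteq> of_real (r^2)" by (metis abs_power2 norm_of_real order.irrefl)
    thus ?thesis using r by (simp add: b_def)
  qed
  show ?thesis
  proof
    show "p holomorphic_on S" unfolding p_def b_def using r by (intro holomorphic_intros q(1)) auto
    have "f 0 = (-a)^k * q 0" "p 0 = q 0 * of_real r ^ k"
      using q(3) \<open>0 \<in> S\<close> r by (auto simp: p_def b_def power2_eq_square)
    thus "norm (f 0) \<le> norm (p 0)"
      using ar r by (simp add: norm_mult norm_power mult.commute[of "norm (q 0)"] mult_right_mono power_mono)
  next
    fix z :: complex assume z: "z \<in> sphere 0 r"
    hence "z \<in> S" using S(3) by auto
    thus "norm (p z) = norm (f z)"
      using z r q(3) norm_blaschke_numerator_on_circle[of z r a]
      by (simp add: p_def b_def norm_mult norm_power)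
  next
    have "p z = 0 \<longleftrightarrow> f z = 0 \<and> z \<noteq> a" if "z \<in> ball 0 r" for z
    proof -
      have "z \<in> S" "b z \<noteq> 0" using that S(3) b_nz by auto
      thus ?thesis using q(2,3) by (cases "z = a") (auto simp: p_def)
    qed
    thus "{z\<in>ball 0 r. p z = 0} = {z\<in>ball 0 r. f z = 0} - {a}" by blast
  qed
qed

lemma jensen_inequality_finite_zeros:
  fixes f :: "complex \<Rightarrow> complex"
  assumes "f holomorphic_on S" "open S" "connected S" "cball 0 r \<subseteq> S" "r > 0" "f 0 \<noteq> 0"
    and "\<forall>z\<in>sphere 0 r. f z \<noteq> 0" "finite {z\<in>ball 0 r. f z = 0}"
  shows "\<exists>I. ((\<lambda>t. ln (norm (f (of_real r * cis t)))) has_integral I) {0..2*pi}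
             \<and> 2*pi * ln (norm (f 0)) \<le> I"
  using assms
proof (induction "card {z\<in>ball 0 r. f z = 0}" arbitrary: f)
  case 0
  have "{z\<in>ball 0 r. f z = 0} = {}" using "0.hyps" "0.prems"(8) by simp
  hence "f z \<noteq> 0" if "z \<in> cball 0 r" for z
    using that "0.prems"(7) by (cases "norm z = r") auto
  thus ?case using jensen_formula_zero_free[OF "0.prems"(1,2,4,5)] by blast
next
  case (Suc n)
  have "{z\<in>ball 0 r. f z = 0} \<noteq> {}" using Suc.hyps(2) by (metis card.empty Zero_not_Suc)
  then obtain a where a: "a \<in> ball 0 r" "f a = 0" by blast
  obtain p where p: "p holomorphic_on S" "norm (f 0) \<le> norm (p 0)"
      "\<And>z. z \<in> sphere 0 r \<Longrightarrow> norm (p z) = norm (f z)"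
      "{z\<in>ball 0 r. p z = 0} = {z\<in>ball 0 r. f z = 0} - {a}"
    using divide_out_zero_by_blaschke_factor[OF Suc.prems(1-4,6) a] by blast
  have "n = card {z\<in>ball 0 r. p z = 0}"
    using Suc.hyps(2) Suc.prems(8) a unfolding p(4) by simp
  moreover have "p 0 \<noteq> 0" using p(2) Suc.prems(6) by auto
  moreover have "\<forall>z\<in>sphere 0 r. p z \<noteq> 0" using p(3) Suc.prems(7) by (metis norm_eq_zero)
  moreover have "finite {z\<in>ball 0 r. p z = 0}" using Suc.prems(8) unfolding p(4) by simp
  ultimately obtain I where I: "((\<lambda>t. ln (norm (p (of_real r * cis t)))) has_integral I) {0..2*pi}"
      "2*pi * ln (norm (p 0)) \<le> I"
    using Suc.hyps(1) p(1) Suc.prems(2-5) by blast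
  have "norm (p (of_real r * cis t)) = norm (f (of_real r * cis t))" for t
    using p(3) Suc.prems(5) by (simp add: norm_mult)
  with I(1) have "((\<lambda>t. ln (norm (f (of_real r * cis t)))) has_integral I) {0..2*pi}" by simp
  moreover have "2*pi * ln (norm (f 0)) \<le> 2*pi * ln (norm (p 0))"
    using p(2) Suc.prems(6) by (simp add: ln_mono)
  ultimately show ?case using I(2) by (meson order.trans)
qed

lemma finite_zeros_compact_subset:
  fixes f :: "complex \<Rightarrow> complex"
  assumes "f holomorphic_on S" "open S" "connected S" "compact K" "K \<subseteq> S" "\<exists>w\<in>S. f w \<noteq> 0"
  shows "finite {z\<in>K. f z = 0}"
proof (cases "f constant_on S")
  case True
  then have "{z\<in>K. f z = 0} = {}" using assms(5,6) unfolding constant_on_def by auto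
  then show ?thesis by (metis finite.emptyI)
qed (use holomorphic_compact_finite_zeros assms in blast)

lemma jensen_inequality:
  fixes f :: "complex \<Rightarrow> complex"
  assumes "f holomorphic_on S" "open S" "connected S" "cball 0 r \<subseteq> S" "r > 0" "f 0 \<noteq> 0"
    and "\<forall>z\<in>sphere 0 r. f z \<noteq> 0"
  shows "\<exists>I. ((\<lambda>t. ln (norm (f (of_real r * cis t)))) has_integral I) {0..2*pi}
             \<and> 2*pi * ln (norm (f 0)) \<le> I"
proof (rule jensen_inequality_finite_zeros[OF assms])
  have "0 \<in> S" using assms(4,5) by auto
  hence "finite {z\<in>cball 0 r. f z = 0}"
    using assms by (intro finite_zeros_compact_subset[where S=S]) auto
  then show "finite {z\<in>ball 0 r. f z = 0}" by (rule rev_finite_subset) auto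
qed

lemma exists_zero_free_circle:
  fixes g :: "complex \<Rightarrow> complex"
  assumes "g holomorphic_on ball 0 1" "\<exists>z\<in>ball 0 1. g z \<noteq> 0" "a < b" "b < 1"
  obtains r where "a < r" "r < b" "\<forall>z\<in>sphere 0 r. g z \<noteq> 0"
proof -
  have "finite {z\<in>cball 0 b. g z = 0}"
    using assms by (intro finite_zeros_compact_subset[where S="ball 0 1"]) auto
  hence "finite (norm ` {z\<in>cball 0 b. g z = 0})" by blast
  moreover have "infinite {a<..<b}" using assms(3) by simp
  ultimately have "infinite ({a<..<b} - norm ` {z\<in>cball 0 b. g z = 0})"
    using Diff_infinite_finite by blast
  then obtain r where r: "r \<in> {a<..<b}" "r \<notin> norm ` {z\<in>cball 0 b. g z = 0}"
    using infinite_imp_nonempty by blast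
  have "g z \<noteq> 0" if "z \<in> sphere 0 r" for z
  proof
    assume "g z = 0"
    with that r(1) have "z \<in> {z\<in>cball 0 b. g z = 0}" by simp
    with that r(2) show False by (metis image_eqI mem_sphere_0)
  qed
  then show ?thesis using that r(1) by auto
qed

lemma zero_free_circles_tending_to_one:
  fixes g :: "complex \<Rightarrow> complex"
  assumes "g holomorphic_on ball 0 1" "\<exists>z\<in>ball 0 1. g z \<noteq> 0"
  obtains \<rho> :: "nat \<Rightarrow> real" where "filterlim \<rho> (at_left 1) sequentially"
    "\<And>n. 1/2 \<le> \<rho> n" "\<And>n. \<rho> n < 1" "\<And>n. \<forall>z\<in>sphere 0 (\<rho> n). g z \<noteq> 0"
proof -
  have "1 - 1/(real n+2) < 1 - 1/(real n+3)" for n by (simp add: field_simps)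
  hence "\<exists>r. 1 - 1/(real n+2) < r \<and> r < 1 - 1/(real n+3) \<and> (\<forall>z\<in>sphere 0 r. g z \<noteq> 0)" for n
    using exists_zero_free_circle[OF assms] by (smt (verit) divide_pos_pos of_nat_0_le_iff)
  then obtain \<rho> where \<rho>: "\<And>n. 1 - 1/(real n+2) < \<rho> n" "\<And>n. \<rho> n < 1 - 1/(real n+3)"
      "\<And>n. \<forall>z\<in>sphere 0 (\<rho> n). g z \<noteq> 0"
    by metis
  have lower: "1/2 \<le> \<rho> n" for n
    using \<rho>(1)[of n] by (smt (verit, best) field_sum_of_halves frac_le of_nat_0_le_iff)
  have upper: "\<rho> n < 1" for n using \<rho>(2)[of n] by (smt (verit) divide_pos_pos of_nat_0_le_iff)
  have "(\<lambda>n. 1/real (n+2)) \<longlonglongrightarrow> 0"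
    by (rule LIMSEQ_ignore_initial_segment[OF lim_inverse_n'])
  from tendsto_diff[OF tendsto_const this, of 1]
  have "(\<lambda>n. 1 - 1/(real n+2)) \<longlonglongrightarrow> 1" by (simp add: add.commute)
  hence "\<rho> \<longlonglongrightarrow> 1"
    by (rule tendsto_sandwich[rotated 2, OF _ tendsto_const])
       (use \<rho>(1) upper in \<open>auto intro: always_eventually less_imp_le\<close>)
  hence "filterlim \<rho> (at_left 1) sequentially"
    using upper by (intro tendsto_imp_filterlim_at_left) (auto intro: always_eventually)
  then show ?thesis using that lower upper \<rho>(3) by blast
qed


lemma log_norm_circle_integral_uniform_lower_bound:
  fixes g :: "complex \<Rightarrow> complex"
  assumes hol: "g holomorphic_on ball 0 1" and nz: "\<exists>z\<in>ball 0 1. g z \<noteq> 0"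
  obtains C where "\<And>\<rho>. 1/2 \<le> \<rho> \<Longrightarrow> \<rho> < 1 \<Longrightarrow> \<forall>z\<in>sphere 0 \<rho>. g z \<noteq> 0 \<Longrightarrow>
    \<exists>I. ((\<lambda>t. ln (norm (g (of_real \<rho> * cis t)))) has_integral I) {0..2*pi} \<and> C \<le> I"
proof -
  obtain h k where h: "h holomorphic_on ball 0 1" "h 0 \<noteq> 0"
      "\<And>z. z \<in> ball 0 1 \<Longrightarrow> g z = (z - 0)^k * h z"
    using holomorphic_factor_zero_global[OF hol open_ball connected_ball, of 0] nz by auto
  have "\<exists>I. ((\<lambda>t. ln (norm (g (of_real \<rho> * cis t)))) has_integral I) {0..2*pi}
          \<and> 2*pi * (k * ln (1/2) + ln (norm (h 0))) \<le> I"
    if \<rho>: "1/2 \<le> \<rho>" "\<rho> < 1" and sph: "\<forall>z\<in>sphere 0 \<rho>. g z \<noteq> 0" for \<rho>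
  proof -
    have on_circle: "of_real \<rho> * cis t \<in> ball 0 1 \<inter> sphere 0 \<rho>" for t
      using \<rho> by (simp add: norm_mult)
    have "\<forall>z\<in>sphere 0 \<rho>. h z \<noteq> 0" using sph h(3) \<rho> by (auto simp: dist_norm)
    then obtain I where I: "((\<lambda>t. ln (norm (h (of_real \<rho> * cis t)))) has_integral I) {0..2*pi}"
        "2*pi * ln (norm (h 0)) \<le> I"
      using jensen_inequality[OF h(1) open_ball connected_ball _ _ h(2), of \<rho>] \<rho>
      by (auto simp: cball_subset_ball_iff)
    have "ln (norm (g (of_real \<rho> * cis t))) = k * ln \<rho> + ln (norm (h (of_real \<rho> * cis t)))" for t
      using h(3) on_circle[of t] sph \<rho> by (auto simp: norm_mult norm_power ln_mult ln_realpow)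
    with has_integral_add[OF has_integral_const_real[of "k * ln \<rho>" 0 "2*pi"] I(1)]
    have "((\<lambda>t. ln (norm (g (of_real \<rho> * cis t)))) has_integral 2*pi * (k * ln \<rho>) + I) {0..2*pi}"
      by simp
    moreover have "2*pi * (k * ln (1/2)) \<le> 2*pi * (k * ln \<rho>)"
      using \<rho> by (intro mult_left_mono) auto
    with I(2) have "2*pi * (k * ln (1/2) + ln (norm (h 0))) \<le> 2*pi * (k * ln \<rho>) + I"
      by (simp only: distrib_left)
    ultimately show ?thesis by blast
  qed
  then show ?thesis using that by blast
qed

lemma AE_not_tendsto_top_if_nn_integral_bounded:
  fixes u :: "nat \<Rightarrow> 'a \<Rightarrow> ennreal"
  assumes meas: "\<And>n. u n \<in> borel_measurable M" and bound: "\<And>n. integral\<^sup>N M (u n) \<le> ennreal C"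
  shows "AE x in M. \<not> ((\<lambda>n. u n x) \<longlongrightarrow> top) sequentially"
proof -
  have "(\<integral>\<^sup>+ x. liminf (\<lambda>n. u n x) \<partial>M) \<le> liminf (\<lambda>n. integral\<^sup>N M (u n))"
    using meas by (rule nn_integral_liminf)
  also have "\<dots> \<le> limsup (\<lambda>n. integral\<^sup>N M (u n))" by (rule Liminf_le_Limsup) simp
  also have "\<dots> \<le> ennreal C" using bound by (intro Limsup_bounded) auto
  finally have "(\<integral>\<^sup>+ x. liminf (\<lambda>n. u n x) \<partial>M) \<noteq> top"
    using ennreal_less_top top.not_eq_extremum by (metis order_le_less_trans)
  moreover have "(\<lambda>x. liminf (\<lambda>n. u n x)) \<in> borel_measurable M"
    using meas by (intro borel_measurable_liminf) auto
  ultimately have "AE x in M. liminf (\<lambda>n. u n x) \<noteq> top"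
    using nn_integral_PInf_AE unfolding infinity_ennreal_def by blast
  then show ?thesis
    by (rule eventually_mono) (metis lim_imp_Liminf trivial_limit_sequentially)
qed

lemma null_sets_tendsto_at_top_if_integrals_bounded:
  fixes G :: "nat \<Rightarrow> real \<Rightarrow> real"
  assumes meas: "\<And>n. G n \<in> borel_measurable lborel" and nonneg: "\<And>n t. t \<in> {a..b} \<Longrightarrow> 0 \<le> G n t"
    and bound: "\<And>n. \<exists>J. (G n has_integral J) {a..b} \<and> J \<le> C"
  shows "{t \<in> {a..b}. filterlim (\<lambda>n. G n t) at_top sequentially} \<in> null_sets lebesgue"
proof -
  define u where "u n t = ennreal (indicator {a..b} t * G n t)" for n t
  have u_meas: "u n \<in> borel_measurable lborel" for n
    using meas unfolding u_def by measurable
  have "integral\<^sup>N lborel (u n) \<le> ennreal C" for n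
  proof -
    obtain J where J: "(G n has_integral J) {a..b}" "J \<le> C" using bound by blast
    have "integral\<^sup>N lborel (u n) = ennreal J"
      unfolding u_def using J(1) nonneg by (subst nn_integral_has_integral_lebesgue) (auto simp: indicator_def)
    thus ?thesis using J(2) by (simp add: ennreal_leI)
  qed
  then have "AE t in lborel. \<not> ((\<lambda>n. u n t) \<longlongrightarrow> top) sequentially"
    using AE_not_tendsto_top_if_nn_integral_bounded u_meas by blast
  then obtain N where N: "N \<in> null_sets lborel" "\<And>t. ((\<lambda>n. u n t) \<longlongrightarrow> top) sequentially \<Longrightarrow> t \<in> N"
    by (elim AE_E) (auto simp: null_sets_def subset_eq)
  have "t \<in> N" if "t \<in> {a..b}" "filterlim (\<lambda>n. G n t) at_top sequentially" for t
    using that N(2) by (simp add: u_def ennreal_tendsto_top_eq_at_top)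
  hence "{t \<in> {a..b}. filterlim (\<lambda>n. G n t) at_top sequentially} \<subseteq> N" by blast
  moreover have "N \<in> null_sets lebesgue" using N(1) null_sets_completionI by blast
  ultimately show ?thesis by (rule null_sets_completion_subset)
qed

lemma null_sets_radial_limit_zero:
  fixes g :: "complex \<Rightarrow> complex"
  assumes hol: "g holomorphic_on ball 0 1" and bd: "\<And>z. z \<in> ball 0 1 \<Longrightarrow> norm (g z) \<le> M"
    and nz: "\<exists>z\<in>ball 0 1. g z \<noteq> 0"
  shows "{t \<in> {0..2*pi}. ((\<lambda>r::real. g (of_real r * cis t)) \<longlongrightarrow> 0) (at_left 1)} \<in> null_sets lebesgue"
proof -
  obtain \<rho> where \<rho>: "filterlim \<rho> (at_left 1) sequentially" "\<And>n. 1/2 \<le> \<rho> n" "\<And>n. \<rho> n < 1"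
      "\<And>n. \<forall>z\<in>sphere 0 (\<rho> n). g z \<noteq> 0"
    using zero_free_circles_tending_to_one[OF hol nz] by blast
  obtain C where C: "\<And>n. \<exists>I. ((\<lambda>t. ln (norm (g (of_real (\<rho> n) * cis t)))) has_integral I) {0..2*pi} \<and> C \<le> I"
    using log_norm_circle_integral_uniform_lower_bound[OF hol nz] \<rho>(2-4) by metis
  have circle: "of_real (\<rho> n) * cis t \<in> ball 0 1 \<inter> sphere 0 (\<rho> n)" for n t
    using \<rho>(2,3)[of n] by (simp add: norm_mult)
  hence g_circle: "g (of_real (\<rho> n) * cis t) \<noteq> 0" "norm (g (of_real (\<rho> n) * cis t)) \<le> M" for n t
    using \<rho>(4) bd by blast+
  define G where "G n t = ln M - ln (norm (g (of_real (\<rho> n) * cis t)))" for n t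
  have "continuous_on UNIV (\<lambda>t. g (of_real (\<rho> n) * cis t))" for n
    using circle by (intro continuous_on_compose2[OF holomorphic_on_imp_continuous_on[OF hol]])
      (auto intro!: continuous_intros simp del: Int_iff)
  hence "continuous_on UNIV (G n)" for n
    unfolding G_def[abs_def] using g_circle by (intro continuous_intros) auto
  moreover have "0 \<le> G n t" for n t
    using g_circle[of n t] by (simp add: G_def ln_mono)
  moreover have "\<exists>J. (G n has_integral J) {0..2*pi} \<and> J \<le> 2*pi * ln M - C" for n
  proof -
    obtain I where I: "((\<lambda>t. ln (norm (g (of_real (\<rho> n) * cis t)))) has_integral I) {0..2*pi}" "C \<le> I"
      using C by blast
    have "(G n has_integral 2*pi * ln M - I) {0..2*pi}"
      unfolding G_def using has_integral_diff[OF has_integral_const_real[of "ln M" 0 "2*pi"] I(1)]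
      by simp
    thus ?thesis using I(2) by force
  qed
  ultimately have null: "{t \<in> {0..2*pi}. filterlim (\<lambda>n. G n t) at_top sequentially} \<in> null_sets lebesgue"
    by (intro null_sets_tendsto_at_top_if_integrals_bounded) (auto simp: borel_measurable_continuous_onI)
  have "filterlim (\<lambda>n. G n t) at_top sequentially"
    if lim: "((\<lambda>r::real. g (of_real r * cis t)) \<longlongrightarrow> 0) (at_left 1)" for t
  proof -
    have "((\<lambda>n. g (of_real (\<rho> n) * cis t)) \<longlongrightarrow> 0) sequentially"
      using filterlim_compose[OF lim \<rho>(1)] by (simp add: o_def)
    hence "filterlim (\<lambda>n. norm (g (of_real (\<rho> n) * cis t))) (at_right 0) sequentially"
      using g_circle by (intro tendsto_imp_filterlim_at_right tendsto_norm_zero) (auto intro: always_eventually)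
    hence "filterlim (\<lambda>n. - ln (norm (g (of_real (\<rho> n) * cis t)))) at_top sequentially"
      by (rule filterlim_compose[OF filterlim_uminus_at_top_at_bot filterlim_compose[OF ln_at_0]])
    thus ?thesis
      unfolding G_def using filterlim_tendsto_add_at_top[OF tendsto_const] by fastforce
  qed
  hence "{t \<in> {0..2*pi}. ((\<lambda>r::real. g (of_real r * cis t)) \<longlongrightarrow> 0) (at_left 1)}
      \<subseteq> {t \<in> {0..2*pi}. filterlim (\<lambda>n. G n t) at_top sequentially}" by blast
  with null show ?thesis by (rule null_sets_completion_subset[rotated])
qed

lemma Re_ell_pos:
  fixes x :: complex
  assumes "norm x < 1"
  shows "Re (ell x) > 0"
proof -
  have "(Re x)^2 + (Im x)^2 < 1" using assms by (simp add: cmod_power2 power_less_one_iff flip: cmod_power2)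
  moreover have "Re x < 1" using assms complex_Re_le_cmod[of x] by linarith
  hence "(Re (1 - x))^2 + (Im (1 - x))^2 > 0" by (simp add: add_pos_nonneg)
  ultimately show ?thesis
    unfolding ell_def Re_divide by (intro divide_pos_pos) (auto simp: power2_eq_square algebra_simps)
qed

lemma class_P_ell_rotation:
  fixes c :: complex
  assumes "norm c = 1"
  shows "class_P (\<lambda>w. ell (c * w))"
  unfolding class_P_def
proof (intro conjI ballI)
  have cw: "norm (c * w) < 1" "c * w \<noteq> 1" if "w \<in> ball 0 1" for w
  proof -
    show "norm (c * w) < 1" using that assms by (simp add: norm_mult)
    then show "c * w \<noteq> 1" by auto
  qed
  show "(\<lambda>w. ell (c * w)) holomorphic_on ball 0 1"
    unfolding ell_def using cw(2) by (intro holomorphic_intros) auto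
  show "Re (ell (c * w)) > 0" if "w \<in> ball 0 1" for w
    using Re_ell_pos cw(1) that by blast
qed (simp add: ell_def)

lemma Re_mult_ell_imaginary:
  fixes s :: real
  shows "Re (w * ell (\<i> * of_real s)) = ((1 - s^2) * Re w - 2 * s * Im w) / (1 + s^2)"
proof -
  have "1 + \<i> * of_real s \<noteq> 0" by (simp add: complex_eq_iff)
  hence "ell (\<i> * of_real s) = ((1 + \<i> * of_real s) * (1 + \<i> * of_real s))
                              / ((1 - \<i> * of_real s) * (1 + \<i> * of_real s))"
    unfolding ell_def by (rule mult_divide_mult_cancel_right[symmetric])
  also have "(1 + \<i> * of_real s) * (1 + \<i> * of_real s) = of_real (1 - s^2) + \<i> * of_real (2 * s)"
    by (simp add: complex_eq_iff power2_eq_square)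
  also have "(1 - \<i> * of_real s) * (1 + \<i> * of_real s) = of_real (1 + s^2)"
    by (simp add: complex_eq_iff power2_eq_square)
  finally show ?thesis
    by (simp only: times_divide_eq_right Re_divide_of_real) (simp add: algebra_simps)
qed

lemma T_op_class_P_imp_Im_bound:
  fixes F \<phi> :: "complex \<Rightarrow> complex"
  assumes P: "class_P F" and T: "\<forall>f. class_P f \<longrightarrow> class_P (T_op F \<phi> f)" and z: "z \<in> ball 0 1"
  shows "2 * norm (\<phi> z) * \<bar>Im (F z)\<bar> \<le> Re (F z)"
proof (cases "\<phi> z = 0")
  case True
  then show ?thesis using P z unfolding class_P_def by (simp add: less_imp_le)
next
  case False
  \<comment> \<open>test the hypothesis on the rotation of \<open>ell\<close> that turns \<open>\<phi> z\<close> into \<open>\<plusminus>\<i> \<bar>\<phi> z\<bar>\<close>, the sign matching that of \<open>Im (F z)\<close>\<close>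
  define s :: real where "s = (if Im (F z) \<ge> 0 then 1 else -1) * norm (\<phi> z)"
  define c where "c = \<i> * of_real s / \<phi> z"
  have "norm c = 1" using False by (simp add: c_def s_def norm_mult norm_divide)
  hence "class_P (T_op F \<phi> (\<lambda>w. ell (c * w)))" using T class_P_ell_rotation by blast
  moreover have "c * \<phi> z = \<i> * of_real s" using False by (simp add: c_def)
  ultimately have "Re (F z * ell (\<i> * of_real s)) > 0"
    using z unfolding class_P_def T_op_def by metis
  hence "((1 - s^2) * Re (F z) - 2 * s * Im (F z)) / (1 + s^2) > 0"
    by (simp only: Re_mult_ell_imaginary)
  moreover have "1 + s^2 > 0" by (simp add: add_pos_nonneg)
  ultimately have "(1 - s^2) * Re (F z) - 2 * s * Im (F z) > 0"
    by (simp add: zero_less_divide_iff)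
  moreover have "s^2 = (norm (\<phi> z))^2" "s * Im (F z) = norm (\<phi> z) * \<bar>Im (F z)\<bar>"
    by (auto simp: s_def power2_eq_square)
  moreover have "0 \<le> (norm (\<phi> z))^2 * Re (F z)"
    using P z unfolding class_P_def by (simp add: less_imp_le)
  ultimately show ?thesis by (simp add: algebra_simps)
qed

lemma ell_inverse:
  fixes x :: complex
  assumes "x \<noteq> 1"
  shows "x = (ell x - 1) / (ell x + 1)"
  using assms by (simp add: ell_def field_simps)

lemma radial_limit_Re_zero_cases:
  fixes \<phi> \<omega> :: "complex \<Rightarrow> complex"
  assumes \<omega>: "schwarz_type \<omega>" and P: "class_P (ell \<circ> \<omega>)"
    and T: "\<forall>f. class_P f \<longrightarrow> class_P (T_op (ell \<circ> \<omega>) \<phi> f)"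
    and lim: "radial_limit (ell \<circ> \<omega>) \<zeta> L" and ReL: "Re L = 0" and \<zeta>: "norm \<zeta> = 1"
  shows "((\<lambda>r::real. \<omega> (of_real r * \<zeta>) + 1) \<longlongrightarrow> 0) (at_left 1)
         \<or> ((\<lambda>r::real. \<phi> (of_real r * \<zeta>)) \<longlongrightarrow> 0) (at_left 1)"
proof -
  define F where "F r = ell (\<omega> (of_real r * \<zeta>))" for r :: real
  have F_lim: "(F \<longlongrightarrow> L) (at_left 1)"
    using lim unfolding radial_limit_def F_def[abs_def] by (simp add: o_def)
  have inside: "\<forall>\<^sub>F r in at_left 1. of_real r * \<zeta> \<in> ball 0 1"
    using eventually_at_left_real[of 0 "1::real"] by (rule eventually_mono) (auto simp: norm_mult \<zeta>)
  show ?thesis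
  proof (cases "L = 0")
    case True
    have "((\<lambda>r. (F r - 1) / (F r + 1) + 1) \<longlongrightarrow> (L - 1) / (L + 1) + 1) (at_left 1)"
      using True by (intro tendsto_intros F_lim) auto
    moreover have "\<forall>\<^sub>F r in at_left 1. (F r - 1) / (F r + 1) + 1 = \<omega> (of_real r * \<zeta>) + 1"
      using inside
    proof eventually_elim
      case (elim r)
      hence "\<omega> (of_real r * \<zeta>) \<noteq> 1" using \<omega> unfolding schwarz_type_def by fastforce
      then show ?case unfolding F_def by (metis ell_inverse)
    qed
    ultimately have "((\<lambda>r::real. \<omega> (of_real r * \<zeta>) + 1) \<longlongrightarrow> 0) (at_left 1)"
      using True by (simp add: tendsto_cong)
    then show ?thesis ..
  next
    case False
    with ReL have ImL: "Im L \<noteq> 0" by (simp add: complex_eq_iff)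
    have "\<forall>\<^sub>F r in at_left 1. Im (F r) \<noteq> 0"
      using tendsto_imp_eventually_ne[OF tendsto_Im[OF F_lim] ImL] .
    with inside have "\<forall>\<^sub>F r in at_left 1. norm (\<phi> (of_real r * \<zeta>)) \<le> Re (F r) / (2 * \<bar>Im (F r)\<bar>)"
    proof eventually_elim
      case (elim r)
      from T_op_class_P_imp_Im_bound[OF P T elim(1)] elim(2) show ?case
        by (simp add: F_def pos_le_divide_eq mult_ac)
    qed
    moreover have "((\<lambda>r. Re (F r) / (2 * \<bar>Im (F r)\<bar>)) \<longlongrightarrow> Re L / (2 * \<bar>Im L\<bar>)) (at_left 1)"
      using ImL by (intro tendsto_intros F_lim) auto
    ultimately have "((\<lambda>r::real. \<phi> (of_real r * \<zeta>)) \<longlongrightarrow> 0) (at_left 1)"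
      using ReL Lim_null_comparison by fastforce
    then show ?thesis ..
  qed
qed

theorem proposition3p3:
  fixes \<phi> \<omega> :: "complex \<Rightarrow> complex"
  assumes "schwarz_type \<phi>" and "schwarz_type \<omega>"
    and "\<exists>z\<in>ball 0 1. \<phi> z \<noteq> 0"
    and "class_P (ell \<circ> \<omega>)"
    and "\<forall>f. class_P f \<longrightarrow> class_P (T_op (ell \<circ> \<omega>) \<phi> f)"
  shows "{t \<in> {0..2*pi}. \<exists>L. radial_limit (ell \<circ> \<omega>) (cis t) L \<and> Re L = 0} \<in> null_sets lebesgue"
proof -
  have \<phi>: "\<phi> holomorphic_on ball 0 1" "\<And>z. z \<in> ball 0 1 \<Longrightarrow> norm (\<phi> z) \<le> 1"
    and \<omega>: "\<omega> holomorphic_on ball 0 1" "\<And>z. z \<in> ball 0 1 \<Longrightarrow> norm (\<omega> z + 1) \<le> 2" "\<omega> 0 + 1 \<noteq> 0"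
    using assms(1,2) unfolding schwarz_type_def
    by (auto simp: image_subset_iff less_imp_le intro: norm_triangle_le)
  let ?E\<omega> = "{t \<in> {0..2*pi}. ((\<lambda>r::real. \<omega> (of_real r * cis t) + 1) \<longlongrightarrow> 0) (at_left 1)}"
  let ?E\<phi> = "{t \<in> {0..2*pi}. ((\<lambda>r::real. \<phi> (of_real r * cis t)) \<longlongrightarrow> 0) (at_left 1)}"
  have "?E\<omega> \<in> null_sets lebesgue"
    using \<omega> by (intro null_sets_radial_limit_zero[of _ 2]) (auto intro!: holomorphic_intros)
  moreover have "?E\<phi> \<in> null_sets lebesgue"
    using \<phi> assms(3) by (intro null_sets_radial_limit_zero[of _ 1])
  ultimately have "?E\<omega> \<union> ?E\<phi> \<in> null_sets lebesgue" by (rule null_sets.Un)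
  moreover have "{t \<in> {0..2*pi}. \<exists>L. radial_limit (ell \<circ> \<omega>) (cis t) L \<and> Re L = 0} \<subseteq> ?E\<omega> \<union> ?E\<phi>"
    using radial_limit_Re_zero_cases[OF assms(2,4,5) _ _ norm_cis] by blast
  ultimately show ?thesis using null_sets_completion_subset by blast
qed

end
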